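(* Let $n\ge1$, let $z_1,\dots,z_n$ be indeterminates, and let $m_2\ge1$, $m_1\ge0$ be integers. Then \begin{align*} M(m_2,m_1,n)=\;& m_2!\,m_1!\,(n-m_1-m_2)\sum_{i=0}^{m_2}(-1)^i\,c_i\,e_{m_2-i}\,e_{m_2+m_1+i}\\ &-(m_2-1)!\,(m_1+2)!\sum_{i=0}^{m_2-1}(-1)^i\,\frac{(m_1+2+2i)(m_1+i+1)!}{i!\,(m_1+2)!}\,e_{m_2-1-i}\,e_{m_2+m_1+1+i}, \end{align*} where $c_0=1$ and $c_i=\frac{(m_1+2i)(m_1+i-1)!}{i!\,m_1!}$ for $i\ge1$.
   Context: $e_r$ is the elementary symmetric polynomial of degree $r$ in $z_1,\dots,z_n$, with $e_0=1$ and $e_r=0$ for $r>n$. For $m_2\ge1$, $m_1\ge0$, with $N=m_1+m_2+1$ and the sums running over all $N$-tuples $(b_1,\dots,b_N)$ of pairwise distinct elements of $\{1,\dots,n\}$, \[ M(m_2,m_1,n)=\sum_{b} z_{b_1}^2\cdots z_{b_{m_2}}^2\,z_{b_{m_2+1}}\cdots z_{b_{m_2+m_1}}\;-\;\sum_{b} z_{b_1}^2\cdots z_{b_{m_2-1}}^2\,z_{b_{m_2}}z_{b_{m_2+1}}\cdots z_{b_{m_2+m_1+1}}. \] *)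

theory Defs
  imports Complex_Main "HOL-Library.FuncSet"
begin

text \<open>Polynomials in the indeterminates z_1..z_n are represented by evaluation at an
arbitrary point z :: nat => real (only z 1, ..., z n matter). A polynomial identity with
rational coefficients holds iff it holds for all real evaluations.\<close>

definition elem_sym :: "nat \<Rightarrow> nat \<Rightarrow> (nat \<Rightarrow> real) \<Rightarrow> real" where
  "elem_sym n r z = (\<Sum>S\<in>{S. S \<subseteq> {1..n} \<and> card S = r}. \<Prod>j\<in>S. z j)"

definition distinct_tuples :: "nat \<Rightarrow> nat \<Rightarrow> (nat \<Rightarrow> nat) set" where
  "distinct_tuples N n = {b \<in> {1..N} \<rightarrow>\<^sub>E {1..n}. inj_on b {1..N}}"

definition M :: "nat \<Rightarrow> nat \<Rightarrow> nat \<Rightarrow> (nat \<Rightarrow> real) \<Rightarrow> real" where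
  "M m2 m1 n z =
     (\<Sum>b\<in>distinct_tuples (m1 + m2 + 1) n.
        (\<Prod>j\<in>{1..m2}. (z (b j))^2) * (\<Prod>j\<in>{m2+1..m2+m1}. z (b j)))
   - (\<Sum>b\<in>distinct_tuples (m1 + m2 + 1) n.
        (\<Prod>j\<in>{1..m2-1}. (z (b j))^2) * (\<Prod>j\<in>{m2..m2+m1+1}. z (b j)))"

definition coef_c :: "nat \<Rightarrow> nat \<Rightarrow> real" where
  "coef_c m1 i = (if i = 0 then 1
     else real (m1 + 2*i) * fact (m1 + i - 1) / (fact i * fact m1))"

end

(*
  Each of the two sums defining M runs over injective placements of a fixed exponent
  pattern (2 repeated a times, 1 repeated b times, 0 repeated c times) on the variables.
  Forgetting the order inside each block, such a sum is a! b! c! times m(a,b,c), the sum of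
  prod_A z_j^2 * prod_B z_j over pairwise disjoint A, B, C in {1..n} of sizes a, b, c; and
  m(a,b,1) = (n - a - b) m(a,b,0), since C is then any one of the unused variables.

  The heart of the matter is the expansion of m(a,b,0), the monomial symmetric polynomial of
  shape 2^a 1^b, as sum_i (-1)^i c(b,i) e_(a-i) e_(a+b+i) with
  c(b,i) = binom(b+i,i) + binom(b+i-1,i-1), which is the paper's c_i. Both sides satisfy the
  same recursion in n: adding z_(n+1) turns every e_r into e_r + z_(n+1) e_(r-1), the z^2-terms
  reproduce the identity for (a-1,b), and the z-terms telescope to the identity for (a,b-1)
  because c(b+1,i) - c(b+1,i-1) = c(b,i).
*)

theory Submission
  imports Defs
begin

text \<open>Integer-indexed, so that \<open>e\<^sub>r = 0\<close> for \<open>r < 0\<close> needs no case distinction in the index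
  shifts below.\<close>

fun esym :: "(nat \<Rightarrow> real) \<Rightarrow> nat \<Rightarrow> int \<Rightarrow> real" where
  "esym z 0 r = (if r = 0 then 1 else 0)"
| "esym z (Suc n) r = esym z n r + z (Suc n) * esym z n (r - 1)"

lemma esym_neg: "r < 0 \<Longrightarrow> esym z n r = 0"
  by (induction n arbitrary: r) auto

lemma esym_0 [simp]: "esym z n 0 = 1"
  by (induction n) (auto simp: esym_neg)

lemma elem_sym_0: "elem_sym n 0 z = 1"
proof -
  have "{S. S \<subseteq> {1..n} \<and> card S = 0} = {{}}"
    using finite_subset[of _ "{1..n}"] by auto
  then show ?thesis by (simp add: elem_sym_def)
qed

lemma elem_sym_Suc:
  "elem_sym (Suc n) (Suc k) z = elem_sym n (Suc k) z + z (Suc n) * elem_sym n k z"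
proof -
  define A where "A = {S. S \<subseteq> {1..n} \<and> card S = Suc k}"
  define B where "B = {S. S \<subseteq> {1..n} \<and> card S = k}"
  have fin_A: "finite A" unfolding A_def by (rule finite_subset[of _ "Pow {1..n}"]) auto
  have fin_B: "finite B" unfolding B_def by (rule finite_subset[of _ "Pow {1..n}"]) auto
  have B_fresh: "finite T" "Suc n \<notin> T" if "T \<in> B" for T
    using that finite_subset[of T "{1..n}"] unfolding B_def by auto
  have split: "{S. S \<subseteq> {1..Suc n} \<and> card S = Suc k} = A \<union> insert (Suc n) ` B"
  proof (intro equalityI subsetI)
    fix S assume S: "S \<in> {S. S \<subseteq> {1..Suc n} \<and> card S = Suc k}"
    have "finite S" using S finite_subset[of S "{1..Suc n}"] by auto
    show "S \<in> A \<union> insert (Suc n) ` B"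
    proof (cases "Suc n \<in> S")
      case True
      have "S - {Suc n} \<in> B" using S True \<open>finite S\<close> unfolding B_def by auto
      moreover have "S = insert (Suc n) (S - {Suc n})" using True by auto
      ultimately show ?thesis by blast
    next
      case False
      then have "S \<subseteq> {1..n}" using S by (auto simp: le_Suc_eq)
      then show ?thesis using S unfolding A_def by auto
    qed
  next
    fix S assume "S \<in> A \<union> insert (Suc n) ` B"
    then show "S \<in> {S. S \<subseteq> {1..Suc n} \<and> card S = Suc k}"
    proof
      assume "S \<in> A" then show ?thesis unfolding A_def by auto
    next
      assume "S \<in> insert (Suc n) ` B"
      then obtain T where "T \<in> B" "S = insert (Suc n) T" by blast
      then show ?thesis using B_fresh[of T] unfolding B_def by auto
    qed
  qed
  have disjoint: "A \<inter> insert (Suc n) ` B = {}" unfolding A_def by auto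
  have inj: "inj_on (insert (Suc n)) B"
    by (rule inj_onI) (metis B_fresh(2) insert_ident)
  have "elem_sym (Suc n) (Suc k) z = (\<Sum>S\<in>A. prod z S) + (\<Sum>S\<in>insert (Suc n) ` B. prod z S)"
    unfolding elem_sym_def split using fin_A fin_B disjoint by (simp add: sum.union_disjoint)
  also have "(\<Sum>S\<in>insert (Suc n) ` B. prod z S) = (\<Sum>S\<in>B. z (Suc n) * prod z S)"
    unfolding sum.reindex[OF inj] o_def using B_fresh by (intro sum.cong refl) simp
  finally show ?thesis unfolding elem_sym_def A_def B_def by (simp add: sum_distrib_left)
qed

lemma elem_sym_eq_esym: "elem_sym n r z = esym z n (int r)"
proof (induction n arbitrary: r)
  case 0
  have "{S. S \<subseteq> {1..0::nat} \<and> card S = r} = (if r = 0 then {{}} else {})" by auto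
  then show ?case by (simp add: elem_sym_def)
next
  case (Suc n)
  then show ?case by (cases r) (simp_all add: elem_sym_0 elem_sym_Suc)
qed

text \<open>\<open>msym z n a b c\<close> is the sum of \<open>\<Prod>j\<in>A. z j ^ 2 * \<Prod>j\<in>B. z j\<close> over pairwise disjoint
  \<open>A, B, C \<subseteq> {1..n}\<close> of sizes \<open>a, b, c\<close>; the recursion decides whether the last variable lies
  in \<open>A\<close>, \<open>B\<close>, \<open>C\<close> or none of them.\<close>

fun msym :: "(nat \<Rightarrow> real) \<Rightarrow> nat \<Rightarrow> nat \<Rightarrow> nat \<Rightarrow> nat \<Rightarrow> real" where
  "msym z 0 a b c = (if a = 0 \<and> b = 0 \<and> c = 0 then 1 else 0)"
| "msym z (Suc n) a b c = msym z n a b c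
     + (if a > 0 then z (Suc n)^2 * msym z n (a - 1) b c else 0)
     + (if b > 0 then z (Suc n) * msym z n a (b - 1) c else 0)
     + (if c > 0 then msym z n a b (c - 1) else 0)"

definition msym_coeff :: "nat \<Rightarrow> nat \<Rightarrow> real" where
  "msym_coeff b i = real ((b + i) choose i) + (if i = 0 then 0 else real ((b + i - 1) choose (i - 1)))"

lemma msym_coeff_Suc_diff:
  "msym_coeff (Suc b) i - (if i = 0 then 0 else msym_coeff (Suc b) (i - 1)) = msym_coeff b i"
proof (cases i)
  case (Suc k)
  then show ?thesis by (cases k) (simp_all add: msym_coeff_def)
qed (simp add: msym_coeff_def)

lemma coef_c_eq_msym_coeff: "coef_c b i = msym_coeff b i"
proof (cases i)
  case (Suc k)
  define C where "C = real ((b + k) choose k)"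
  have "real (Suc (b + k)) * C = real (Suc (b + k) choose Suc k) * real (Suc k)"
    using Suc_times_binomial_eq[of "b + k" k] unfolding C_def by (metis of_nat_mult)
  then have "msym_coeff b i = (real (b + Suc k) / real (Suc k) + 1) * C"
    unfolding msym_coeff_def Suc C_def by (simp add: field_simps)
  also have "\<dots> = real (b + 2 * Suc k) * C / real (Suc k)"
    by (simp add: field_simps)
  also have "\<dots> = coef_c b i"
    unfolding coef_c_def Suc C_def by (simp add: binomial_fact field_simps)
  finally show ?thesis ..
qed (simp add: msym_coeff_def coef_c_def)

lemma alternating_sum_shift:
  fixes c g :: "nat \<Rightarrow> 'a :: comm_ring_1"
  shows "(\<Sum>i\<le>a. (-1)^i * c i * (g (Suc i) + g i)) =
    (\<Sum>i\<le>a. (-1)^i * (c i - (if i = 0 then 0 else c (i - 1))) * g i) + (-1)^a * c a * g (Suc a)"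
  by (induction a) (auto simp: algebra_simps)

definition pair_sum :: "(int \<Rightarrow> real) \<Rightarrow> nat \<Rightarrow> nat \<Rightarrow> real" where
  "pair_sum E a b = (\<Sum>i\<le>a. (-1)^i * msym_coeff b i * E (int a - int i) * E (int a + int b + int i))"

lemma pair_sum_shift_both:
  assumes "\<forall>r<0. E r = 0"
  shows "(\<Sum>i\<le>a. (-1)^i * msym_coeff b i * (E (int a - int i - 1) * E (int a + int b + int i - 1)))
    = (if a = 0 then 0 else pair_sum E (a - 1) b)"
proof (cases a)
  case (Suc a')
  then have "(\<Sum>i\<le>a. (-1)^i * msym_coeff b i * (E (int a - int i - 1) * E (int a + int b + int i - 1)))
    = (\<Sum>i\<le>a'. (-1)^i * msym_coeff b i * (E (int a - int i - 1) * E (int a + int b + int i - 1)))"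
    by (simp add: assms)
  also have "\<dots> = pair_sum E a' b"
    unfolding pair_sum_def using Suc by (intro sum.cong) (auto simp: algebra_simps)
  finally show ?thesis using Suc by simp
qed (simp add: assms)

lemma pair_sum_shift_one:
  assumes "\<forall>r<0. E r = 0"
  shows "(\<Sum>i\<le>a. (-1)^i * msym_coeff b i *
      (E (int a - int i - 1) * E (int a + int b + int i) + E (int a - int i) * E (int a + int b + int i - 1)))
    = (if b = 0 then 0 else pair_sum E a (b - 1))"
proof -
  define g where "g i = E (int a - int i) * E (int a + int b - 1 + int i)" for i
  have "(\<Sum>i\<le>a. (-1)^i * msym_coeff b i *
      (E (int a - int i - 1) * E (int a + int b + int i) + E (int a - int i) * E (int a + int b + int i - 1)))
    = (\<Sum>i\<le>a. (-1)^i * msym_coeff b i * (g (Suc i) + g i))"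
    unfolding g_def by (intro sum.cong) (auto simp: algebra_simps)
  also have "\<dots> = (\<Sum>i\<le>a. (-1)^i * (msym_coeff b i - (if i = 0 then 0 else msym_coeff b (i - 1))) * g i)"
    unfolding alternating_sum_shift by (simp add: g_def assms)
  also have "\<dots> = (if b = 0 then 0 else pair_sum E a (b - 1))"
  proof (cases b)
    case 0
    have "(\<Sum>i\<le>a. (-1)^i * (msym_coeff b i - (if i = 0 then 0 else msym_coeff b (i - 1))) * g i)
      = (\<Sum>i\<le>min a 1. (-1)^i * g i)"
      using \<open>b = 0\<close> by (intro sum.mono_neutral_cong_right) (auto simp: msym_coeff_def)
    also have "\<dots> = 0"
      using \<open>b = 0\<close> by (cases a) (auto simp: g_def assms add.commute)
    finally show ?thesis using \<open>b = 0\<close> by simp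
  next
    case (Suc b')
    then show ?thesis
      unfolding pair_sum_def g_def Suc msym_coeff_Suc_diff by (simp add: algebra_simps)
  qed
  finally show ?thesis .
qed

lemma pair_sum_esym_Suc:
  "pair_sum (esym z (Suc n)) a b = pair_sum (esym z n) a b
     + (if a = 0 then 0 else z (Suc n)^2 * pair_sum (esym z n) (a - 1) b)
     + (if b = 0 then 0 else z (Suc n) * pair_sum (esym z n) a (b - 1))"
proof -
  define E where "E = esym z n"
  have E_neg: "\<forall>r<0. E r = 0"
    by (simp add: E_def esym_neg)
  have "pair_sum (esym z (Suc n)) a b = pair_sum E a b
      + z (Suc n)^2 * (\<Sum>i\<le>a. (-1)^i * msym_coeff b i *
          (E (int a - int i - 1) * E (int a + int b + int i - 1)))
      + z (Suc n) * (\<Sum>i\<le>a. (-1)^i * msym_coeff b i *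
          (E (int a - int i - 1) * E (int a + int b + int i)
           + E (int a - int i) * E (int a + int b + int i - 1)))"
    unfolding pair_sum_def sum_distrib_left sum.distrib[symmetric]
    by (intro sum.cong) (auto simp: E_def algebra_simps power2_eq_square)
  also have "\<dots> = pair_sum E a b
     + (if a = 0 then 0 else z (Suc n)^2 * pair_sum E (a - 1) b)
     + (if b = 0 then 0 else z (Suc n) * pair_sum E a (b - 1))"
    unfolding pair_sum_shift_both[OF E_neg] pair_sum_shift_one[OF E_neg] by simp
  finally show ?thesis unfolding E_def .
qed

lemma msym_eq_pair_sum: "msym z n a b 0 = pair_sum (esym z n) a b"
proof (induction n arbitrary: a b)
  case 0
  show ?case
    by (cases a) (auto simp: pair_sum_def msym_coeff_def intro!: sum.neutral)
next
  case (Suc n)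
  then show ?case unfolding pair_sum_esym_Suc by simp
qed

lemma msym_eq_elem_sym_sum:
  "msym z n a b 0 = (\<Sum>i=0..a. (-1)^i * coef_c b i * elem_sym n (a - i) z * elem_sym n (a + b + i) z)"
  unfolding msym_eq_pair_sum pair_sum_def atLeast0AtMost
  by (intro sum.cong refl) (simp add: coef_c_eq_msym_coeff elem_sym_eq_esym)

lemma msym_one_free_slot: "msym z n a b 1 = (real n - real a - real b) * msym z n a b 0"
proof (induction n arbitrary: a b)
  case (Suc n)
  note IH = Suc.IH[unfolded One_nat_def]
  show ?case by (cases a; cases b) (simp_all add: IH algebra_simps)
qed simp

definition inj_maps :: "'a set \<Rightarrow> 'b set \<Rightarrow> ('a \<Rightarrow> 'b) set" where
  "inj_maps D A = {f \<in> D \<rightarrow>\<^sub>E A. inj_on f D}"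

definition inj_power_sum :: "('b \<Rightarrow> real) \<Rightarrow> ('a \<Rightarrow> nat) \<Rightarrow> 'a set \<Rightarrow> 'b set \<Rightarrow> real" where
  "inj_power_sum z e D A = (\<Sum>f\<in>inj_maps D A. \<Prod>d\<in>D. z (f d) ^ e d)"

lemma finite_inj_maps: "finite D \<Longrightarrow> finite A \<Longrightarrow> finite (inj_maps D A)"
  unfolding inj_maps_def by (rule finite_subset[of _ "D \<rightarrow>\<^sub>E A"]) (auto intro: finite_PiE)

lemma inj_maps_insert:
  assumes "x \<notin> A"
  shows "inj_maps D (insert x A) = inj_maps D A \<union> (\<Union>d\<in>D. (\<lambda>g. g(d := x)) ` inj_maps (D - {d}) A)"
proof (intro equalityI subsetI)
  fix f assume f: "f \<in> inj_maps D (insert x A)"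
  show "f \<in> inj_maps D A \<union> (\<Union>d\<in>D. (\<lambda>g. g(d := x)) ` inj_maps (D - {d}) A)"
  proof (cases "x \<in> f ` D")
    case False
    then have "f \<in> inj_maps D A" using f unfolding inj_maps_def by (auto simp: PiE_iff)
    then show ?thesis by blast
  next
    case True
    then obtain d where d: "d \<in> D" "f d = x" by auto
    define g where "g = f(d := undefined)"
    have "g \<in> (D - {d}) \<rightarrow>\<^sub>E A"
    proof (rule PiE_I)
      fix d' assume "d' \<in> D - {d}"
      then have "f d' \<noteq> x" "f d' \<in> insert x A"
        using f d unfolding inj_maps_def inj_on_def by (auto simp: PiE_iff)
      then show "g d' \<in> A" using \<open>d' \<in> D - {d}\<close> unfolding g_def by auto
    qed (use f in \<open>auto simp: g_def inj_maps_def PiE_iff extensional_def\<close>)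
    moreover have "inj_on g (D - {d})"
      using f unfolding g_def inj_maps_def inj_on_def by auto
    moreover have "f = g(d := x)" unfolding g_def using d by auto
    ultimately show ?thesis using d unfolding inj_maps_def by blast
  qed
next
  fix f assume "f \<in> inj_maps D A \<union> (\<Union>d\<in>D. (\<lambda>g. g(d := x)) ` inj_maps (D - {d}) A)"
  then show "f \<in> inj_maps D (insert x A)"
  proof
    assume "f \<in> inj_maps D A" then show ?thesis unfolding inj_maps_def by (auto simp: PiE_iff)
  next
    assume "f \<in> (\<Union>d\<in>D. (\<lambda>g. g(d := x)) ` inj_maps (D - {d}) A)"
    then obtain d g where d: "d \<in> D" "g \<in> inj_maps (D - {d}) A" "f = g(d := x)" by blast
    then have "f \<in> D \<rightarrow>\<^sub>E insert x A"
      unfolding inj_maps_def by (auto simp: PiE_iff extensional_def)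
    moreover have "inj_on f D"
      using d assms unfolding inj_maps_def inj_on_def by (auto simp: PiE_iff)
    ultimately show ?thesis unfolding inj_maps_def by blast
  qed
qed

lemma inj_on_fun_upd_inj_maps: "inj_on (\<lambda>g. g(d := x)) (inj_maps (D - {d}) A)"
proof (rule inj_onI)
  fix g1 g2 assume g: "g1 \<in> inj_maps (D - {d}) A" "g2 \<in> inj_maps (D - {d}) A" "g1(d := x) = g2(d := x)"
  show "g1 = g2"
  proof
    fix y show "g1 y = g2 y"
    proof (cases "y = d")
      case True
      then show ?thesis using g unfolding inj_maps_def by (auto simp: PiE_iff extensional_def)
    next
      case False
      then show ?thesis using fun_cong[OF g(3), of y] by simp
    qed
  qed
qed

lemma fun_upd_inj_maps_disjoint:
  assumes "x \<notin> A" "d1 \<in> D" "d1 \<noteq> d2"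
  shows "(\<lambda>g. g(d1 := x)) ` inj_maps (D - {d1}) A \<inter> (\<lambda>g. g(d2 := x)) ` inj_maps (D - {d2}) A = {}"
proof (rule ccontr)
  assume "\<not> ?thesis"
  then obtain g1 g2 where g: "g2 \<in> inj_maps (D - {d2}) A" "g1(d1 := x) = g2(d2 := x)" by blast
  have "g2 d1 = x" using fun_cong[OF g(2), of d1] \<open>d1 \<noteq> d2\<close> by simp
  moreover have "g2 d1 \<in> A"
    using g(1) assms(2,3) unfolding inj_maps_def by (auto simp: PiE_iff)
  ultimately show False using assms(1) by simp
qed

lemma inj_power_sum_insert:
  assumes "x \<notin> A" "finite A" "finite D"
  shows "inj_power_sum z e D (insert x A)
    = inj_power_sum z e D A + (\<Sum>d\<in>D. z x ^ e d * inj_power_sum z e (D - {d}) A)"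
proof -
  define F where "F f = (\<Prod>d\<in>D. z (f d) ^ e d)" for f
  have disjoint: "inj_maps D A \<inter> (\<Union>d\<in>D. (\<lambda>g. g(d := x)) ` inj_maps (D - {d}) A) = {}"
    using assms(1) unfolding inj_maps_def by (auto simp: PiE_iff)
  have F_upd: "F (g(d := x)) = z x ^ e d * (\<Prod>d'\<in>D - {d}. z (g d') ^ e d')" if "d \<in> D" for g d
  proof -
    have "(\<Prod>d'\<in>D - {d}. z ((g(d := x)) d') ^ e d') = (\<Prod>d'\<in>D - {d}. z (g d') ^ e d')"
      by (intro prod.cong) auto
    then show ?thesis
      unfolding F_def prod.remove[OF assms(3) that] by simp
  qed
  have "inj_power_sum z e D (insert x A)
      = sum F (inj_maps D A) + sum F (\<Union>d\<in>D. (\<lambda>g. g(d := x)) ` inj_maps (D - {d}) A)"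
    unfolding inj_power_sum_def F_def[symmetric] inj_maps_insert[OF assms(1)]
    by (rule sum.union_disjoint) (use assms disjoint in \<open>auto intro: finite_inj_maps\<close>)
  also have "sum F (\<Union>d\<in>D. (\<lambda>g. g(d := x)) ` inj_maps (D - {d}) A)
      = (\<Sum>d\<in>D. sum F ((\<lambda>g. g(d := x)) ` inj_maps (D - {d}) A))"
    by (rule sum.UNION_disjoint) (simp_all add: assms finite_inj_maps fun_upd_inj_maps_disjoint)
  also have "(\<Sum>d\<in>D. sum F ((\<lambda>g. g(d := x)) ` inj_maps (D - {d}) A))
      = (\<Sum>d\<in>D. z x ^ e d * inj_power_sum z e (D - {d}) A)"
  proof (rule sum.cong[OF refl])
    fix d assume "d \<in> D"
    then show "sum F ((\<lambda>g. g(d := x)) ` inj_maps (D - {d}) A) = z x ^ e d * inj_power_sum z e (D - {d}) A"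
      unfolding inj_power_sum_def sum_distrib_left sum.reindex[OF inj_on_fun_upd_inj_maps] o_def
      by (simp add: F_upd)
  qed
  finally show ?thesis unfolding inj_power_sum_def F_def .
qed

definition exp_count :: "('a \<Rightarrow> nat) \<Rightarrow> 'a set \<Rightarrow> nat \<Rightarrow> nat" where
  "exp_count e D k = card {d \<in> D. e d = k}"

lemma exp_count_remove:
  assumes "finite D" "d \<in> D"
  shows "exp_count e (D - {d}) k = (if e d = k then exp_count e D k - 1 else exp_count e D k)"
proof -
  have "{d' \<in> D - {d}. e d' = k} = {d' \<in> D. e d' = k} - {d}" by auto
  then show ?thesis unfolding exp_count_def using assms by (simp add: card_Diff_singleton_if)
qed

lemma sum_by_exp_count:
  assumes "finite D" "\<forall>d\<in>D. e d \<le> 2"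
  shows "(\<Sum>d\<in>D. G (e d) :: real)
    = real (exp_count e D 2) * G 2 + real (exp_count e D 1) * G 1 + real (exp_count e D 0) * G 0"
proof -
  have "(\<Sum>d\<in>D. G (e d)) =
      (\<Sum>d\<in>D. (if e d = 2 then G 2 else 0) + (if e d = 1 then G 1 else 0)
        + (if e d = 0 then G 0 else 0))"
    using assms(2) by (intro sum.cong refl) (auto simp: le_Suc_eq numeral_2_eq_2)
  then show ?thesis
    unfolding sum.distrib exp_count_def using assms(1) by (simp add: sum.inter_filter[symmetric])
qed

lemma of_nat_mult_fact_pred: "real a * fact (a - 1) = (if a = 0 then 0 else fact a)"
  by (cases a) auto

lemma fact_mult_msym_Suc:
  "fact a * fact b * fact c * msym z (Suc n) a b c = fact a * fact b * fact c * msym z n a b c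
    + real a * (z (Suc n)^2 * (fact (a - 1) * fact b * fact c * msym z n (a - 1) b c))
    + real b * (z (Suc n) * (fact a * fact (b - 1) * fact c * msym z n a (b - 1) c))
    + real c * (fact a * fact b * fact (c - 1) * msym z n a b (c - 1))"
proof -
  have "real a * (z (Suc n)^2 * (fact (a - 1) * fact b * fact c * msym z n (a - 1) b c))
      = fact a * fact b * fact c * (if a > 0 then z (Suc n)^2 * msym z n (a - 1) b c else 0)"
       "real b * (z (Suc n) * (fact a * fact (b - 1) * fact c * msym z n a (b - 1) c))
      = fact a * fact b * fact c * (if b > 0 then z (Suc n) * msym z n a (b - 1) c else 0)"
       "real c * (fact a * fact b * fact (c - 1) * msym z n a b (c - 1))
      = fact a * fact b * fact c * (if c > 0 then msym z n a b (c - 1) else 0)"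
    using of_nat_mult_fact_pred[of a] of_nat_mult_fact_pred[of b] of_nat_mult_fact_pred[of c]
    by (auto simp: algebra_simps)
  then show ?thesis
    unfolding msym.simps by (simp only: ring_distribs)
qed

lemma inj_power_sum_eq_msym:
  fixes z :: "nat \<Rightarrow> real"
  assumes "finite D" "\<forall>d\<in>D. e d \<le> 2"
  shows "inj_power_sum z e D {1..n} = fact (exp_count e D 2) * fact (exp_count e D 1) * fact (exp_count e D 0)
           * msym z n (exp_count e D 2) (exp_count e D 1) (exp_count e D 0)"
  using assms
proof (induction n arbitrary: D)
  case 0
  show ?case
  proof (cases "D = {}")
    case True
    then show ?thesis by (simp add: inj_power_sum_def inj_maps_def exp_count_def)
  next
    case False
    then obtain d where d: "d \<in> D" by blast
    have "inj_maps D {1..0::nat} = {}" using d unfolding inj_maps_def by auto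
    moreover have "exp_count e D (e d) > 0" unfolding exp_count_def using d 0 by (auto simp: card_gt_0_iff)
    moreover have "e d = 0 \<or> e d = 1 \<or> e d = 2" using d 0 by auto
    ultimately show ?thesis unfolding inj_power_sum_def by auto
  qed
next
  case (Suc n)
  define x where "x = z (Suc n)"
  define a where "a = exp_count e D 2"
  define b where "b = exp_count e D 1"
  define c where "c = exp_count e D 0"
  define T2 where "T2 = x^2 * (fact (a - 1) * fact b * fact c * msym z n (a - 1) b c)"
  define T1 where "T1 = x * (fact a * fact (b - 1) * fact c * msym z n a (b - 1) c)"
  define T0 where "T0 = fact a * fact b * fact (c - 1) * msym z n a b (c - 1)"
  have fin: "finite D" and exps: "\<forall>d\<in>D. e d \<le> 2" using Suc.prems by auto
  define G where "G k = (if k = 2 then T2 else if k = 1 then T1 else T0)" for k :: nat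
  have remove_term: "x ^ e d * inj_power_sum z e (D - {d}) {1..n} = G (e d)" if "d \<in> D" for d
  proof -
    have "e d = 0 \<or> e d = 1 \<or> e d = 2" using exps that by auto
    then show ?thesis
      using Suc.IH[of "D - {d}"] fin exps
      unfolding exp_count_remove[OF fin that] a_def[symmetric] b_def[symmetric] c_def[symmetric]
        G_def T2_def T1_def T0_def by auto
  qed
  have "inj_power_sum z e D {1..Suc n}
      = inj_power_sum z e D {1..n} + (\<Sum>d\<in>D. x ^ e d * inj_power_sum z e (D - {d}) {1..n})"
  proof -
    have "{1..Suc n} = insert (Suc n) {1..n}" by auto
    then show ?thesis unfolding x_def by (simp add: inj_power_sum_insert fin)
  qed
  also have "(\<Sum>d\<in>D. x ^ e d * inj_power_sum z e (D - {d}) {1..n}) = real a * T2 + real b * T1 + real c * T0"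
    using sum_by_exp_count[OF fin exps, of G] remove_term unfolding a_def b_def c_def
    by (simp add: G_def)
  also have "inj_power_sum z e D {1..n} = fact a * fact b * fact c * msym z n a b c"
    using Suc.IH[OF fin exps] a_def b_def c_def by simp
  finally show ?case
    unfolding a_def[symmetric] b_def[symmetric] c_def[symmetric] fact_mult_msym_Suc T2_def T1_def T0_def x_def
    by (simp only: add.assoc)
qed

text \<open>\<open>block_exps a b\<close> is the exponent pattern \<open>2\<^sup>a 1\<^sup>b 0\<^sup>c\<close> of the tuple positions; the two sums
  in \<open>M\<close> have the patterns \<open>(m\<^sub>2, m\<^sub>1, 1)\<close> and \<open>(m\<^sub>2 - 1, m\<^sub>1 + 2, 0)\<close>.\<close>

definition block_exps :: "nat \<Rightarrow> nat \<Rightarrow> nat \<Rightarrow> nat" where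
  "block_exps a b j = (if j \<le> a then 2 else if j \<le> a + b then 1 else 0)"

lemma prod_block_exps:
  assumes "N = a + b + c"
  shows "(\<Prod>j\<in>{1..N}. w j ^ block_exps a b j) = (\<Prod>j\<in>{1..a}. w j ^ 2) * (\<Prod>j\<in>{a + 1..a + b}. w j)"
proof -
  define f where "f j = w j ^ block_exps a b j" for j
  have "prod f {1..N} = prod f {1..a} * prod f {a + 1..a + (b + c)}"
    unfolding assms add.assoc by (rule prod.ub_add_nat) simp
  also have "prod f {a + 1..a + (b + c)} = prod f {a + 1..a + b} * prod f {a + b + 1..a + b + c}"
    using prod.ub_add_nat[of "a + 1" "a + b" f c] by (simp add: add.assoc)
  also have "prod f {1..a} = (\<Prod>j\<in>{1..a}. w j ^ 2)"
    by (rule prod.cong) (auto simp: f_def block_exps_def)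
  also have "prod f {a + 1..a + b} = (\<Prod>j\<in>{a + 1..a + b}. w j)"
    by (rule prod.cong) (auto simp: f_def block_exps_def)
  also have "prod f {a + b + 1..a + b + c} = 1"
    by (rule prod.neutral) (auto simp: f_def block_exps_def)
  finally show ?thesis unfolding f_def by simp
qed

lemma exp_count_block_exps:
  assumes "N = a + b + c"
  shows "exp_count (block_exps a b) {1..N} 2 = a"
    and "exp_count (block_exps a b) {1..N} 1 = b"
    and "exp_count (block_exps a b) {1..N} 0 = c"
proof -
  have "{j \<in> {1..N}. block_exps a b j = 2} = {1..a}"
       "{j \<in> {1..N}. block_exps a b j = 1} = {a + 1..a + b}"
       "{j \<in> {1..N}. block_exps a b j = 0} = {a + b + 1..N}"
    using assms by (auto simp: block_exps_def)
  then show "exp_count (block_exps a b) {1..N} 2 = a"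
            "exp_count (block_exps a b) {1..N} 1 = b"
            "exp_count (block_exps a b) {1..N} 0 = c"
    using assms by (simp_all add: exp_count_def)
qed

lemma inj_power_sum_block_exps:
  assumes "N = a + b + c"
  shows "inj_power_sum z (block_exps a b) {1..N} {1..n} = fact a * fact b * fact c * msym z n a b c"
proof -
  have "\<forall>j\<in>{1..N}. block_exps a b j \<le> 2" by (simp add: block_exps_def)
  from inj_power_sum_eq_msym[OF finite_atLeastAtMost this] show ?thesis
    by (simp only: exp_count_block_exps[OF assms])
qed

lemma M_eq_msym:
  assumes "m2 \<ge> 1"
  shows "M m2 m1 n z = fact m2 * fact m1 * msym z n m2 m1 1
    - fact (m2 - 1) * fact (m1 + 2) * msym z n (m2 - 1) (m1 + 2) 0"
proof -
  define N where "N = m1 + m2 + 1"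
  have N_blocks: "N = m2 + m1 + 1" "N = (m2 - 1) + (m1 + 2) + 0"
    unfolding N_def using assms by auto
  have "(m2 - 1) + 1 = m2" "(m2 - 1) + (m1 + 2) = m2 + m1 + 1"
    using assms by auto
  then have "M m2 m1 n z = inj_power_sum z (block_exps m2 m1) {1..N} {1..n}
      - inj_power_sum z (block_exps (m2 - 1) (m1 + 2)) {1..N} {1..n}"
    unfolding M_def inj_power_sum_def N_def[symmetric] distinct_tuples_def inj_maps_def[symmetric]
      prod_block_exps[OF N_blocks(1)] prod_block_exps[OF N_blocks(2)] by (simp only:)
  then show ?thesis
    unfolding inj_power_sum_block_exps[OF N_blocks(1)] inj_power_sum_block_exps[OF N_blocks(2)] by simp
qed

lemma coef_c_add_2: "coef_c (m + 2) i = real (m + 2 + 2 * i) * fact (m + i + 1) / (fact i * fact (m + 2))"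
  by (cases i) (simp_all add: coef_c_def)

theorem lemma3p5:
  fixes n m2 m1 :: nat and z :: "nat \<Rightarrow> real"
  assumes "n \<ge> 1" and "m2 \<ge> 1"
  shows "M m2 m1 n z =
    fact m2 * fact m1 * (real n - real m1 - real m2) *
      (\<Sum>i=0..m2. (-1)^i * coef_c m1 i * elem_sym n (m2 - i) z * elem_sym n (m2 + m1 + i) z)
    - fact (m2 - 1) * fact (m1 + 2) *
      (\<Sum>i=0..m2-1. (-1)^i * (real (m1 + 2 + 2*i) * fact (m1 + i + 1) / (fact i * fact (m1 + 2)))
          * elem_sym n (m2 - 1 - i) z * elem_sym n (m2 + m1 + 1 + i) z)"
proof -
  have "m2 - 1 + (m1 + 2) = m2 + m1 + 1" using assms(2) by simp
  then have "msym z n (m2 - 1) (m1 + 2) 0 =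
      (\<Sum>i=0..m2-1. (-1)^i * (real (m1 + 2 + 2*i) * fact (m1 + i + 1) / (fact i * fact (m1 + 2)))
          * elem_sym n (m2 - 1 - i) z * elem_sym n (m2 + m1 + 1 + i) z)"
    unfolding msym_eq_elem_sym_sum coef_c_add_2 by (simp add: add.assoc)
  then show ?thesis
    unfolding M_eq_msym[OF assms(2)] msym_one_free_slot msym_eq_elem_sym_sum by (simp add: algebra_simps)
qed

end
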